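(* Let $n\ge1$ and let $K_2$ be the closure of the $4$--braid $(\sigma_2\sigma_1\sigma_3\sigma_2)(\sigma_1\sigma_2\sigma_3)^{4n}\sigma_3^{-1}(\sigma_2\sigma_3)^6$. Then, up to units $\pm t^i$, \[\Delta_{K_2}(t)=\sum_{i=0}^n(t^{8n+12+4i}-t^{8n+11+4i})+(t^{8n+9}-t^{8n+8})+\sum_{i=0}^{2n-1}(t^{4n+8+2i}-t^{4n+7+2i})+(t^{4n+6}-t^{4n+4})+(t^{4n+3}-t^{4n+1})+\sum_{i=0}^{n-1}(t^{4+4i}-t^{1+4i})+1.\]
   Context: $\sigma_1,\sigma_2,\sigma_3$ are the standard Artin generators of the $4$--strand braid group; $\Delta_K$ denotes the Alexander polynomial. *)

theory Defs
  imports "HOL-Computational_Algebra.Polynomial" "HOL-Computational_Algebra.Fraction_Field"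
    "Jordan_Normal_Form.Determinant"
begin

text \<open>Laurent polynomials / rational functions in t with integer coefficients.\<close>
type_synonym rf = "int poly fract"

definition tvar :: rf where "tvar = to_fract [:0, 1:]"

text \<open>A braid word in B_m is a list of nonzero integers: k > 0 stands for sigma_k,
  k < 0 for the inverse of sigma_(-k).\<close>

text \<open>Reduced Burau matrix (size (m-1)) of a single generator (Kassel--Turaev convention):
  for sigma_i it is I_(i-2) (+) [[1,t,0],[0,-t,0],[0,1,1]] (+) I_(m-i-2), truncated at the
  borders for i = 1 and i = m-1; for the inverse generator the column (t,-t,1) is replaced by
  (1,-1/t,1/t).\<close>
definition burau_gen :: "nat \<Rightarrow> int \<Rightarrow> rf mat" where
  "burau_gen m k = mat (m - 1) (m - 1) (\<lambda>(r, c).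
     let i = \<bar>k\<bar>; r' = int r; c' = int c in
     if c' = i - 1 then
       (if r' = i - 2 then (if k > 0 then tvar else 1)
        else if r' = i - 1 then (if k > 0 then - tvar else - inverse tvar)
        else if r' = i then (if k > 0 then 1 else inverse tvar)
        else 0)
     else (if r = c then 1 else 0))"

definition burau_word :: "nat \<Rightarrow> int list \<Rightarrow> rf mat" where
  "burau_word m w = foldr (\<lambda>k M. burau_gen m k * M) w (1\<^sub>m (m - 1))"

text \<open>Alexander polynomial of the closure of a braid word in B_m, via the Burau formula
  (1 + t + ... + t^(m-1)) * Delta = det (I - reduced Burau), well defined up to units +-t^i.\<close>
definition alexander_closure :: "nat \<Rightarrow> int list \<Rightarrow> rf" where
  "alexander_closure m w =
     det (1\<^sub>m (m - 1) - burau_word m w) * (1 - tvar) / (1 - tvar ^ m)"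

definition braid_K2 :: "nat \<Rightarrow> int list" where
  "braid_K2 n = [2, 1, 3, 2] @ concat (replicate (4 * n) [1, 2, 3]) @ [-3]
               @ concat (replicate 6 [2, 3])"

definition delta_K2 :: "nat \<Rightarrow> int poly" where
  "delta_K2 n =
     (\<Sum>i\<in>{0..n}. monom 1 (8*n+12+4*i) - monom 1 (8*n+11+4*i))
     + (monom 1 (8*n+9) - monom 1 (8*n+8))
     + (\<Sum>i\<in>{0..<2*n}. monom 1 (4*n+8+2*i) - monom 1 (4*n+7+2*i))
     + (monom 1 (4*n+6) - monom 1 (4*n+4))
     + (monom 1 (4*n+3) - monom 1 (4*n+1))
     + (\<Sum>i\<in>{0..<n}. monom 1 (4+4*i) - monom 1 (1+4*i))
     + 1"

end

theory Submission
  imports Defs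
begin

(* The reduced Burau matrix of the full twist (sigma_1 sigma_2 sigma_3)^4 is t^4 times the
   identity, so the Burau matrix B of the braid of K_2 has entries in Z[t, 1/t, s] with
   s = t^(4n), and (1 - t) det (I - B) is a cubic polynomial in s.  Multiplying the claimed
   Delta_K2 by 1 - t^4 collapses its three geometric sums and leaves the same cubic, so the
   Burau formula gives Delta_K2 exactly, with unit 1. *)

definition mat3 :: "'a \<Rightarrow> 'a \<Rightarrow> 'a \<Rightarrow> 'a \<Rightarrow> 'a \<Rightarrow> 'a \<Rightarrow> 'a \<Rightarrow> 'a \<Rightarrow> 'a \<Rightarrow> 'a mat" where
  "mat3 a b c d e f g h i = mat 3 3 (\<lambda>(r, s). [[a, b, c], [d, e, f], [g, h, i]] ! r ! s)"

lemma mat3_carrier [simp]: "mat3 a b c d e f g h i \<in> carrier_mat 3 3"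
  by (simp add: mat3_def)

lemma mat3_eqI:
  assumes "A \<in> carrier_mat 3 3"
    and "A $$ (0,0) = a" "A $$ (0,1) = b" "A $$ (0,2) = c"
    and "A $$ (1,0) = d" "A $$ (1,1) = e" "A $$ (1,2) = f"
    and "A $$ (2,0) = g" "A $$ (2,1) = h" "A $$ (2,2) = i"
  shows "A = mat3 a b c d e f g h i"
  using assms by (intro eq_matI) (auto simp: mat3_def numeral_3_eq_3 numeral_2_eq_2 less_Suc_eq)

lemma one_mat3: "1\<^sub>m 3 = mat3 1 0 0 0 1 0 0 0 1"
  by (rule mat3_eqI) auto

lemma mat3_mult:
  fixes a1 :: "'a::comm_ring_1"
  shows "mat3 a1 a2 a3 a4 a5 a6 a7 a8 a9 * mat3 b1 b2 b3 b4 b5 b6 b7 b8 b9 =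
    mat3 (a1*b1 + a2*b4 + a3*b7) (a1*b2 + a2*b5 + a3*b8) (a1*b3 + a2*b6 + a3*b9)
         (a4*b1 + a5*b4 + a6*b7) (a4*b2 + a5*b5 + a6*b8) (a4*b3 + a5*b6 + a6*b9)
         (a7*b1 + a8*b4 + a9*b7) (a7*b2 + a8*b5 + a9*b8) (a7*b3 + a8*b6 + a9*b9)"
  by (rule mat3_eqI)
    (auto simp: mat3_def scalar_prod_def numeral_3_eq_3 numeral_2_eq_2 lessThan_Suc)

lemma mat3_minus:
  "mat3 a1 a2 a3 a4 a5 a6 a7 a8 a9 - mat3 b1 b2 b3 b4 b5 b6 b7 b8 b9 =
    mat3 (a1 - b1) (a2 - b2) (a3 - b3) (a4 - b4) (a5 - b5) (a6 - b6) (a7 - b7) (a8 - b8) (a9 - b9)"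
  by (rule mat3_eqI) (auto simp: mat3_def)

lemma mat3_scalar_pow:
  fixes c :: "'a::comm_ring_1"
  shows "mat3 c 0 0 0 c 0 0 0 c ^\<^sub>m k = mat3 (c ^ k) 0 0 0 (c ^ k) 0 0 0 (c ^ k)"
  by (induction k) (simp_all add: carrier_matD[OF mat3_carrier] one_mat3 mat3_mult mult.commute)

lemma det_2x2:
  assumes "A \<in> carrier_mat 2 2"
  shows "det A = A $$ (0,0) * A $$ (1,1) - A $$ (0,1) * A $$ (1,0)"
  using assms by (subst laplace_expansion_row[OF assms, of 0])
    (auto simp: cofactor_def det_single mat_delete_def numeral_2_eq_2)

lemma det_mat3:
  fixes a :: "'a::comm_ring_1"
  shows "det (mat3 a b c d e f g h i) = a*e*i + b*f*g + c*d*h - c*e*g - a*f*h - b*d*i"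
  by (subst laplace_expansion_row[OF mat3_carrier, of 0])
    (auto simp: cofactor_def det_2x2 mat_delete_def mat3_def numeral_3_eq_3 numeral_2_eq_2
       lessThan_Suc algebra_simps)

lemma burau_gen_carrier: "burau_gen m k \<in> carrier_mat (m - 1) (m - 1)"
  by (simp add: burau_gen_def)

lemma burau_word_Nil: "burau_word m [] = 1\<^sub>m (m - 1)"
  by (simp add: burau_word_def)

lemma burau_word_Cons: "burau_word m (k # w) = burau_gen m k * burau_word m w"
  by (simp add: burau_word_def)

lemma burau_word_carrier: "burau_word m w \<in> carrier_mat (m - 1) (m - 1)"
  by (induction w)
    (auto simp: burau_word_Nil burau_word_Cons
      intro!: mult_carrier_mat burau_gen_carrier[simplified])

lemma burau_word_append: "burau_word m (v @ w) = burau_word m v * burau_word m w"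
proof (induction v)
  case Nil
  show ?case
    using burau_word_carrier[of m w] by (simp add: burau_word_Nil)
next
  case (Cons k v)
  then show ?case
    by (simp add: burau_word_Cons
        assoc_mult_mat[OF burau_gen_carrier burau_word_carrier burau_word_carrier])
qed

lemma burau_word_concat_replicate:
  "burau_word m (concat (replicate k w)) = burau_word m w ^\<^sub>m k"
proof (induction k)
  case 0
  show ?case
    using burau_word_carrier[of m w] by (simp add: burau_word_Nil)
next
  case (Suc k)
  have "concat (replicate (Suc k) w) = concat (replicate k w) @ w"
    by (simp flip: replicate_append_same)
  then show ?case
    using Suc by (simp add: burau_word_append)
qed

lemma concat_replicate_mult:
  "concat (replicate (m * k) xs) = concat (replicate k (concat (replicate m xs)))"
  by (induction k) (simp_all add: replicate_add)

lemma burau4_gen1: "burau_gen 4 1 = mat3 (- tvar) 0 0 1 1 0 0 0 1"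
  by (rule mat3_eqI) (auto simp: burau_gen_def)

lemma burau4_gen2: "burau_gen 4 2 = mat3 1 tvar 0 0 (- tvar) 0 0 1 1"
  by (rule mat3_eqI) (auto simp: burau_gen_def)

lemma burau4_gen3: "burau_gen 4 3 = mat3 1 0 0 0 1 tvar 0 0 (- tvar)"
  by (rule mat3_eqI) (auto simp: burau_gen_def)

lemma burau4_gen3_inv: "burau_gen 4 (- 3) = mat3 1 0 0 0 1 1 0 0 (- inverse tvar)"
  by (rule mat3_eqI) (auto simp: burau_gen_def)

lemma burau4_word_Nil: "burau_word 4 [] = mat3 1 0 0 0 1 0 0 0 1"
  by (simp add: burau_word_Nil one_mat3)

lemma burau4_full_twist:
  "burau_word 4 (concat (replicate 4 [1, 2, 3])) = mat3 (tvar^4) 0 0 0 (tvar^4) 0 0 0 (tvar^4)"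
proof -
  have "concat (replicate 4 [1, 2, 3]) = [1, 2, 3, 1, 2, 3, 1, 2, 3, 1, 2, 3 :: int]"
    by (simp add: numeral_eq_Suc)
  then show ?thesis
    by (simp add: burau_word_Cons burau4_word_Nil burau4_gen1 burau4_gen2 burau4_gen3 mat3_mult
        algebra_simps) (simp add: algebra_simps eval_nat_numeral)
qed

lemma burau4_braid_K2:
  fixes n :: nat
  defines "s \<equiv> tvar ^ (4 * n)"
  shows "burau_word 4 (braid_K2 n) =
    mat3 0 0 (- s * tvar^7)
      (- s * tvar) (s * (tvar^4 - tvar^2 - tvar^5 + tvar^7 - tvar^8))
                   (s * (tvar^4 - tvar^3 - tvar^6 + 2 * tvar^7 - tvar^8))
      s (s * (tvar - tvar^3 + tvar^4 - tvar^6)) (s * (tvar^2 - tvar^3 + tvar^5 - tvar^6))"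
proof -
  have twist_power: "burau_word 4 (concat (replicate (4 * n) [1, 2, 3])) = mat3 s 0 0 0 s 0 0 0 s"
    by (simp only: concat_replicate_mult burau_word_concat_replicate[of 4 n] burau4_full_twist
        mat3_scalar_pow s_def power_mult)
  have "concat (replicate 6 [2, 3]) = [2, 3, 2, 3, 2, 3, 2, 3, 2, 3, 2, 3 :: int]"
    by (simp add: numeral_eq_Suc)
  then show ?thesis
    unfolding braid_K2_def burau_word_append twist_power
    by (simp add: burau_word_Cons burau4_word_Nil burau4_gen1 burau4_gen2 burau4_gen3
        burau4_gen3_inv mat3_mult tvar_def field_simps) (simp add: algebra_simps eval_nat_numeral)
qed

definition K2_numerator :: "'a::comm_ring_1 \<Rightarrow> 'a \<Rightarrow> 'a" where
  "K2_numerator t s = 1 - t + s * (t^3 - 2 * t^4 + t^5 + t^6 - 2 * t^7 + 2 * t^8 - t^9)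
     + s^2 * (t^7 - 2 * t^8 + 2 * t^9 - t^10 - t^11 + 2 * t^12 - t^13) + s^3 * (t^15 - t^16)"

lemma det_burau4_braid_K2:
  "det (1\<^sub>m 3 - burau_word 4 (braid_K2 n)) * (1 - tvar) = K2_numerator tvar (tvar ^ (4 * n))"
  unfolding burau4_braid_K2 one_mat3 mat3_minus det_mat3 K2_numerator_def
  by (simp add: algebra_simps eval_nat_numeral)

lemma to_fract_power: "to_fract (p ^ k) = to_fract p ^ k"
  by (induction k) simp_all

lemma to_fract_monom_1: "to_fract (monom 1 k :: int poly) = tvar ^ k"
  by (simp add: tvar_def monom_altdef to_fract_power)

lemma sum_power_diff_telescope:
  fixes x :: "'a::comm_ring_1"
  shows "(1 - x^c) * (\<Sum>i<m. x^(a + c*i) - x^(b + c*i)) = x^a - x^b - x^(a + c*m) + x^(b + c*m)"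
  by (induction m) (simp_all add: algebra_simps power_add)

lemma power_mult_comm: "(x::'a::monoid_mult) ^ (k * n) = (x ^ n) ^ k"
  by (simp add: power_mult[symmetric] mult.commute)

lemma delta_K2_times_1_minus_t4:
  "to_fract (delta_K2 n) * (1 - tvar^4) = K2_numerator tvar (tvar ^ (4 * n))"
proof -
  define x where "x = tvar"
  define r where "r = x ^ n"
  define S1 where "S1 = (\<Sum>i<Suc n. x^(8*n+12 + 4*i) - x^(8*n+11 + 4*i))"
  define S2 where "S2 = (\<Sum>i<2*n. x^(4*n+8 + 2*i) - x^(4*n+7 + 2*i))"
  define S3 where "S3 = (\<Sum>i<n. x^(4 + 4*i) - x^(1 + 4*i))"
  have S1_eq: "(1 - x^4) * S1 = r^8 * (x^12 - x^11) * (1 - r^4 * x^4)"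
    unfolding S1_def sum_power_diff_telescope
    by (simp add: power_add power_mult_comm r_def; simp add: algebra_simps)
  have S2_eq: "(1 - x^2) * S2 = r^4 * (x^8 - x^7) * (1 - r^4)"
    unfolding S2_def sum_power_diff_telescope
    by (simp add: power_add power_mult_comm r_def; simp add: algebra_simps)
  have S3_eq: "(1 - x^4) * S3 = (x^4 - x) * (1 - r^4)"
    unfolding S3_def sum_power_diff_telescope
    by (simp add: power_add power_mult_comm r_def; simp add: algebra_simps)
  have delta_eq:
    "to_fract (delta_K2 n) = S1 + r^8 * (x^9 - x^8) + S2 + r^4 * (x^6 - x^4 + x^3 - x) + S3 + 1"
    by (simp add: delta_K2_def to_fract_monom_1 S1_def S2_def S3_def atLeast0AtMost
        lessThan_Suc_atMost atLeast0LessThan power_add power_mult_comm r_def x_def;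
        simp add: algebra_simps)
  have "to_fract (delta_K2 n) * (1 - x^4) =
      (1 - x^4) * S1 + r^8 * (x^9 - x^8) * (1 - x^4) + (1 + x^2) * ((1 - x^2) * S2)
      + (r^4 * (x^6 - x^4 + x^3 - x) + 1) * (1 - x^4) + (1 - x^4) * S3"
    unfolding delta_eq by (simp add: algebra_simps)
  also have "\<dots> = K2_numerator x (r^4)"
    unfolding S1_eq S2_eq S3_eq K2_numerator_def by (simp add: algebra_simps eval_nat_numeral)
  finally show ?thesis
    by (simp add: x_def r_def power_mult_comm)
qed

lemma one_minus_tvar_power_nonzero:
  assumes "k > 0"
  shows "1 - tvar ^ k \<noteq> 0"
proof -
  have "monom 1 k \<noteq> (1 :: int poly)"
    using assms by (simp add: monom_eq_1_iff)
  then show ?thesis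
    by (metis right_minus_eq to_fract_1 to_fract_eq_iff to_fract_monom_1)
qed

theorem theorem3p2:
  fixes n :: nat
  assumes "n \<ge> 1"
  shows "\<exists>(e::rf) (k::int). (e = 1 \<or> e = -1) \<and>
           alexander_closure 4 (braid_K2 n) = e * tvar powi k * to_fract (delta_K2 n)"
proof (intro exI conjI)
  show "(1::rf) = 1 \<or> 1 = -1"
    by simp
  have "alexander_closure 4 (braid_K2 n) = K2_numerator tvar (tvar ^ (4 * n)) / (1 - tvar^4)"
    using det_burau4_braid_K2[of n] by (simp add: alexander_closure_def)
  also have "\<dots> = to_fract (delta_K2 n)"
    using delta_K2_times_1_minus_t4[of n] one_minus_tvar_power_nonzero[of 4]
    by (simp add: divide_eq_eq)
  finally show "alexander_closure 4 (braid_K2 n) = 1 * tvar powi 0 * to_fract (delta_K2 n)"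
    by simp
qed

end
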